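(* Let $m,n,s,k$ be integers such that $2\leqslant s\leqslant n$, $2\leqslant k\leqslant m$ and $ms=nk$. Let $c\geqslant 1$, let $\Gamma$ be an abelian group of order $nkc$, and let $d=\gcd(s,k)$. If there exists an $\mathrm{MRS}_\Gamma(k/d,\, s;\, mdc/k)$, then there exists an $\mathrm{MRS}_\Gamma(m,n;s,k;c)$.
   Context: For an abelian group $\Gamma$ of order $abc$, an $\mathrm{MRS}_\Gamma(a,b;c)$ is a collection of $c$ (completely filled) arrays of size $a\times b$ whose entries are the elements of $\Gamma$, each appearing exactly once and in a unique array, such that there are $\omega,\delta\in\Gamma$ with every row sum equal to $\omega$ and every column sum equal to $\delta$. For positive integers $m,n,s,k,c$ and an abelian group $\Gamma$ of order $nkc$, an $\mathrm{MRS}_\Gamma(m,n;s,k;c)$ is a set of $c$ partially filled $m\times n$ arrays (some cells may be empty) with entries in $\Gamma$ such that: every element of $\Gamma$ appears exactly once and in a unique array; in every array each row contains exactly $s$ filled cells and each column contains exactly $k$ filled cells; and there exist $\omega,\delta\in\Gamma$ such that in every array each row sum is $\omega$ and each column sum is $\delta$. *)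

theory Defs
  imports Main
begin

text \<open>The abelian group Gamma is the (finite) type 'a of class ab_group_add.
  Arrays are indexed by t < c (array index), i (row), j (column), all from 0.\<close>

definition exists_MRS_full :: "'a::{ab_group_add,finite} itself \<Rightarrow> nat \<Rightarrow> nat \<Rightarrow> nat \<Rightarrow> bool"
  where "exists_MRS_full _ a b c \<longleftrightarrow>
    (\<exists>A :: nat \<Rightarrow> nat \<Rightarrow> nat \<Rightarrow> 'a.
      bij_betw (\<lambda>(t,i,j). A t i j) ({..<c} \<times> {..<a} \<times> {..<b}) UNIV \<and>
      (\<exists>\<omega> \<delta>. (\<forall>t<c. \<forall>i<a. (\<Sum>j<b. A t i j) = \<omega>) \<and>
               (\<forall>t<c. \<forall>j<b. (\<Sum>i<a. A t i j) = \<delta>)))"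

text \<open>MRS_Gamma(m,n;s,k;c): c partially filled m x n arrays; None = empty cell.\<close>
definition exists_MRS_partial :: "'a::{ab_group_add,finite} itself \<Rightarrow> nat \<Rightarrow> nat \<Rightarrow> nat \<Rightarrow> nat \<Rightarrow> nat \<Rightarrow> bool"
  where "exists_MRS_partial _ m n s k c \<longleftrightarrow>
    (\<exists>A :: nat \<Rightarrow> nat \<Rightarrow> nat \<Rightarrow> 'a option.
      bij_betw (\<lambda>(t,i,j). the (A t i j))
        {(t,i,j). t < c \<and> i < m \<and> j < n \<and> A t i j \<noteq> None} UNIV \<and>
      (\<forall>t<c. \<forall>i<m. card {j. j < n \<and> A t i j \<noteq> None} = s) \<and>
      (\<forall>t<c. \<forall>j<n. card {i. i < m \<and> A t i j \<noteq> None} = k) \<and>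
      (\<exists>\<omega> \<delta>. (\<forall>t<c. \<forall>i<m. (\<Sum>j\<in>{j. j < n \<and> A t i j \<noteq> None}. the (A t i j)) = \<omega>) \<and>
               (\<forall>t<c. \<forall>j<n. (\<Sum>i\<in>{i. i < m \<and> A t i j \<noteq> None}. the (A t i j)) = \<delta>)))"

end

theory Submission
  imports Defs
begin

(* Let d = gcd s k and a = k / d. Since k / d is coprime to s / d, the relation m s = n k forces
   m = a q with q s = n d. The t-th partial array is cut into q blocks of a consecutive rows;
   block p receives the full a x s array number t q + p, written into the s cyclically
   consecutive columns p s, ..., p s + s - 1 (mod n). Every row is then a row of a full array:
   s entries with sum omega. The q windows of width s tile q s = n d consecutive columns, i.e.
   they wrap around the n columns exactly d times, so every column meets exactly d blocks, each
   contributing a full column of a full array: a d = k entries with sum d delta. *)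

definition cyclic_offset :: "nat \<Rightarrow> nat \<Rightarrow> nat \<Rightarrow> nat" where
  "cyclic_offset n b j = nat ((int j - int b) mod int n)"

lemma cyclic_offset_add_mod:
  assumes "x < n"
  shows "cyclic_offset n b ((b + x) mod n) = x"
proof -
  have "(int ((b + x) mod n) - int b) mod int n = (int b + int x - int b) mod int n"
    by (simp add: of_nat_mod mod_diff_left_eq)
  then show ?thesis
    using assms unfolding cyclic_offset_def by simp
qed

lemma add_cyclic_offset_mod:
  assumes "j < n"
  shows "(b + cyclic_offset n b j) mod n = j"
proof -
  have "int ((b + cyclic_offset n b j) mod n) = (int b + (int j - int b) mod int n) mod int n"
    using assms unfolding cyclic_offset_def by (simp add: of_nat_mod)
  also have "\<dots> = int j"
    using assms by (simp add: mod_add_right_eq)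
  finally show ?thesis by linarith
qed

lemma bij_betw_cyclic_offset:
  assumes "s \<le> n"
  shows "bij_betw (cyclic_offset n b) {j. j < n \<and> cyclic_offset n b j < s} {..<s}"
  by (rule bij_betw_byWitness[where f' = "\<lambda>x. (b + x) mod n"])
    (use assms in \<open>auto simp: cyclic_offset_add_mod add_cyclic_offset_mod\<close>)

lemma cyclic_offset_div_mult:
  assumes "0 < s" and "s \<le> n"
  shows "cyclic_offset n (x div s * s) (x mod n) = x mod s"
proof -
  have "x mod s < n"
    using assms by (meson less_le_trans mod_less_divisor)
  then have "cyclic_offset n (x div s * s) ((x div s * s + x mod s) mod n) = x mod s"
    by (rule cyclic_offset_add_mod)
  then show ?thesis by simp
qed

(* The windows [p s, p s + s) tile [0, q s) = [0, n d), and column j is met once per lap l < d,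
   at the point j + n l. *)
lemma bij_betw_windows_through_column:
  assumes "q * s = n * d" and "0 < s" and "s \<le> n" and "j < n"
  shows "bij_betw (\<lambda>l. (j + n * l) div s) {..<d} {p. p < q \<and> cyclic_offset n (p * s) j < s}"
    (is "bij_betw ?window _ ?windows")
proof -
  let ?lap = "\<lambda>p. (p * s + cyclic_offset n (p * s) j) div n"
  have offset: "cyclic_offset n (?window l * s) j = (j + n * l) mod s" for l
    using cyclic_offset_div_mult[OF assms(2,3), of "j + n * l"] assms(4) by simp
  show ?thesis
  proof (rule bij_betw_byWitness[where f' = ?lap])
    show "\<forall>l\<in>{..<d}. ?lap (?window l) = l"
      using assms(4) by (simp add: offset)
    show "\<forall>p\<in>?windows. ?window (?lap p) = p"
    proof
      fix p assume "p \<in> ?windows"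
      then have "cyclic_offset n (p * s) j < s" by simp
      moreover have "j + n * ?lap p = p * s + cyclic_offset n (p * s) j"
        using add_cyclic_offset_mod[OF assms(4)] by (metis mod_mult_div_eq)
      ultimately show "?window (?lap p) = p"
        by simp
    qed
    show "?window ` {..<d} \<subseteq> ?windows"
    proof clarify
      fix l assume "l < d"
      have "j + n * l < n * Suc l"
        using assms(4) by simp
      also have "\<dots> \<le> n * d"
        using \<open>l < d\<close> by (intro mult_le_mono2) simp
      finally have "j + n * l < q * s"
        using assms(1) by simp
      then show "?window l < q \<and> cyclic_offset n (?window l * s) j < s"
        using assms(2) by (simp add: offset less_mult_imp_div_less)
    qed
    show "?lap ` ?windows \<subseteq> {..<d}"
    proof clarify
      fix p assume "p < q" "cyclic_offset n (p * s) j < s"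
      then have "p * s + cyclic_offset n (p * s) j < Suc p * s"
        by simp
      also have "\<dots> \<le> q * s"
        using \<open>p < q\<close> by (intro mult_le_mono1) simp
      finally show "?lap p < d"
        using assms(1) by (simp add: less_mult_imp_div_less mult.commute)
    qed
  qed
qed

lemma bij_betw_mult_add_Times:
  fixes a :: nat
  assumes "0 < a"
  shows "bij_betw (\<lambda>(p, r). p * a + r) (P \<times> {..<a}) {i. i div a \<in> P}"
  by (rule bij_betw_byWitness[where f' = "\<lambda>i. (i div a, i mod a)"]) (auto simp: assms)

lemma mult_add_less_mult:
  fixes t p q c :: nat
  assumes "t < c" and "p < q"
  shows "t * q + p < q * c"
proof -
  have "t * q + p < Suc t * q"
    using assms(2) by simp
  also have "\<dots> \<le> c * q"
    using assms(1) by (intro mult_le_mono1) simp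
  finally show ?thesis
    by (simp add: mult.commute)
qed

definition cyclic_stack ::
    "nat \<Rightarrow> nat \<Rightarrow> nat \<Rightarrow> nat \<Rightarrow> (nat \<Rightarrow> nat \<Rightarrow> nat \<Rightarrow> 'a) \<Rightarrow> nat \<Rightarrow> nat \<Rightarrow> nat \<Rightarrow> 'a option"
  where "cyclic_stack a q n s F t i j =
    (if cyclic_offset n (i div a * s) j < s
     then Some (F (t * q + i div a) (i mod a) (cyclic_offset n (i div a * s) j)) else None)"

lemma cyclic_stack_row:
  assumes "s \<le> n"
  shows "card {j. j < n \<and> cyclic_stack a q n s F t i j \<noteq> None} = s"
    and "(\<Sum>j | j < n \<and> cyclic_stack a q n s F t i j \<noteq> None. the (cyclic_stack a q n s F t i j))
      = (\<Sum>x<s. F (t * q + i div a) (i mod a) x)"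
proof -
  have support: "{j. j < n \<and> cyclic_stack a q n s F t i j \<noteq> None}
      = {j. j < n \<and> cyclic_offset n (i div a * s) j < s}"
    by (auto simp: cyclic_stack_def)
  note bij = bij_betw_cyclic_offset[OF assms, of "i div a * s"]
  show "card {j. j < n \<and> cyclic_stack a q n s F t i j \<noteq> None} = s"
    unfolding support using bij_betw_same_card[OF bij] by simp
  show "(\<Sum>j | j < n \<and> cyclic_stack a q n s F t i j \<noteq> None. the (cyclic_stack a q n s F t i j))
      = (\<Sum>x<s. F (t * q + i div a) (i mod a) x)"
    unfolding support sum.reindex_bij_betw[OF bij, symmetric]
    by (rule sum.cong) (auto simp: cyclic_stack_def)
qed

lemma cyclic_stack_column:
  fixes a q n s j :: nat
  assumes "0 < a"
  defines "P \<equiv> {p. p < q \<and> cyclic_offset n (p * s) j < s}"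
  shows "card {i. i < a * q \<and> cyclic_stack a q n s F t i j \<noteq> None} = card P * a"
    and "(\<Sum>i | i < a * q \<and> cyclic_stack a q n s F t i j \<noteq> None. the (cyclic_stack a q n s F t i j))
      = (\<Sum>p\<in>P. \<Sum>r<a. F (t * q + p) r (cyclic_offset n (p * s) j))"
proof -
  have support: "{i. i < a * q \<and> cyclic_stack a q n s F t i j \<noteq> None} = {i. i div a \<in> P}"
    using assms by (auto simp: P_def cyclic_stack_def div_less_iff_less_mult mult.commute)
  note bij = bij_betw_mult_add_Times[OF assms(1), of P]
  show "card {i. i < a * q \<and> cyclic_stack a q n s F t i j \<noteq> None} = card P * a"
    unfolding support bij_betw_same_card[OF bij, symmetric] by (simp add: card_cartesian_product)
  have "(\<Sum>i | i < a * q \<and> cyclic_stack a q n s F t i j \<noteq> None. the (cyclic_stack a q n s F t i j))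
      = (\<Sum>(p, r)\<in>P \<times> {..<a}. the (cyclic_stack a q n s F t (p * a + r) j))"
    unfolding support sum.reindex_bij_betw[OF bij, symmetric] by (simp add: case_prod_unfold)
  also have "\<dots> = (\<Sum>p\<in>P. \<Sum>r<a. F (t * q + p) r (cyclic_offset n (p * s) j))"
    by (simp add: sum.cartesian_product[symmetric] P_def cyclic_stack_def)
  finally show "(\<Sum>i | i < a * q \<and> cyclic_stack a q n s F t i j \<noteq> None. the (cyclic_stack a q n s F t i j))
      = (\<Sum>p\<in>P. \<Sum>r<a. F (t * q + p) r (cyclic_offset n (p * s) j))" .
qed

lemma cyclic_stack_cells:
  assumes "0 < a" and "s \<le> n"
  shows "bij_betw (\<lambda>(t, i, j). (t * q + i div a, i mod a, cyclic_offset n (i div a * s) j))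
    {(t, i, j). t < c \<and> i < a * q \<and> j < n \<and> cyclic_stack a q n s F t i j \<noteq> None}
    ({..<q * c} \<times> {..<a} \<times> {..<s})"
    (is "bij_betw ?position ?cells ?entries")
proof -
  let ?cell = "\<lambda>(T, r, x). (T div q, T mod q * a + r, (T mod q * s + x) mod n)"
  have block: "i div a < q" if "i < a * q" for i
    using that assms(1) by (simp add: div_less_iff_less_mult mult.commute)
  show ?thesis
  proof (rule bij_betw_byWitness[where f' = ?cell])
    show "\<forall>y\<in>?cells. ?cell (?position y) = y"
      by (auto dest: block simp: add_cyclic_offset_mod)
    show "\<forall>y\<in>?entries. ?position (?cell y) = y"
      using assms by (auto simp: cyclic_offset_add_mod)
    show "?position ` ?cells \<subseteq> ?entries"
      using assms(1) by (auto dest: block simp: cyclic_stack_def mult_add_less_mult split: if_splits)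
    show "?cell ` ?entries \<subseteq> ?cells"
    proof (rule image_subsetI)
      fix y assume "y \<in> ?entries"
      then obtain T r x where y: "y = (T, r, x)" "T < q * c" "r < a" "x < s"
        by auto
      then have "0 < q"
        by (cases q) auto
      have "T div q < c"
        using y(2) by (simp add: less_mult_imp_div_less mult.commute)
      moreover have "T mod q * a + r < a * q"
        using \<open>0 < q\<close> y(3) by (simp add: mult_add_less_mult)
      ultimately show "?cell y \<in> ?cells"
        using y assms by (simp add: cyclic_stack_def cyclic_offset_add_mod)
    qed
  qed
qed

lemma exists_MRS_partial_cyclic_stack:
  fixes G :: "'a::{ab_group_add,finite} itself"
  assumes full: "exists_MRS_full G a s (q * c)" and layers: "q * s = n * d" and "s \<le> n"
  shows "exists_MRS_partial G (a * q) n s (a * d) c"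
proof -
  obtain F :: "nat \<Rightarrow> nat \<Rightarrow> nat \<Rightarrow> 'a" and \<omega> \<delta>
    where bij: "bij_betw (\<lambda>(T, r, x). F T r x) ({..<q * c} \<times> {..<a} \<times> {..<s}) UNIV"
      and rows: "\<forall>T<q * c. \<forall>r<a. (\<Sum>x<s. F T r x) = \<omega>"
      and cols: "\<forall>T<q * c. \<forall>x<s. (\<Sum>r<a. F T r x) = \<delta>"
    using full unfolding exists_MRS_full_def by blast
  have "{..<q * c} \<times> {..<a} \<times> {..<s} \<noteq> {}"
    using bij by (auto simp: bij_betw_def)
  then have "0 < a" and "0 < s"
    by auto
  define A where "A = cyclic_stack a q n s F"
  have cells: "bij_betw (\<lambda>(t, i, j). the (A t i j))
      {(t, i, j). t < c \<and> i < a * q \<and> j < n \<and> A t i j \<noteq> None} UNIV"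
  proof (rule bij_betw_cong[THEN iffD1])
    show "bij_betw ((\<lambda>(T, r, x). F T r x) \<circ>
        (\<lambda>(t, i, j). (t * q + i div a, i mod a, cyclic_offset n (i div a * s) j)))
      {(t, i, j). t < c \<and> i < a * q \<and> j < n \<and> A t i j \<noteq> None} UNIV"
      unfolding A_def using cyclic_stack_cells[OF \<open>0 < a\<close> \<open>s \<le> n\<close>] bij by (rule bij_betw_trans)
  qed (auto simp: A_def cyclic_stack_def split: if_splits)
  have block: "t * q + i div a < q * c" if "t < c" and "i < a * q" for t i
  proof -
    have "i div a < q"
      using that(2) \<open>0 < a\<close> by (simp add: div_less_iff_less_mult mult.commute)
    with that(1) show ?thesis
      by (rule mult_add_less_mult)
  qed
  have row_sum: "(\<Sum>j | j < n \<and> A t i j \<noteq> None. the (A t i j)) = \<omega>" if "t < c" and "i < a * q" for t i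
    unfolding A_def cyclic_stack_row(2)[OF \<open>s \<le> n\<close>]
    using rows block[OF that] \<open>0 < a\<close> by simp
  have column_sum: "(\<Sum>i | i < a * q \<and> A t i j \<noteq> None. the (A t i j)) = (\<Sum>l<d. \<delta>)"
    if "t < c" and "j < n" for t j
  proof -
    have "(\<Sum>i | i < a * q \<and> A t i j \<noteq> None. the (A t i j))
        = (\<Sum>p | p < q \<and> cyclic_offset n (p * s) j < s. \<Sum>r<a. F (t * q + p) r (cyclic_offset n (p * s) j))"
      unfolding A_def by (rule cyclic_stack_column(2)[OF \<open>0 < a\<close>])
    also have "\<dots> = (\<Sum>p | p < q \<and> cyclic_offset n (p * s) j < s. \<delta>)"
      using cols mult_add_less_mult[OF \<open>t < c\<close>] by (intro sum.cong) auto
    also have "\<dots> = (\<Sum>l<d. \<delta>)"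
      using bij_betw_windows_through_column[OF layers \<open>0 < s\<close> \<open>s \<le> n\<close> \<open>j < n\<close>]
      by (rule sum.reindex_bij_betw[symmetric])
    finally show ?thesis .
  qed
  have row_card: "card {j. j < n \<and> A t i j \<noteq> None} = s" for t i
    unfolding A_def by (rule cyclic_stack_row(1)[OF \<open>s \<le> n\<close>])
  have column_card: "card {i. i < a * q \<and> A t i j \<noteq> None} = a * d" if "j < n" for t j
    unfolding A_def cyclic_stack_column(1)[OF \<open>0 < a\<close>]
    using bij_betw_same_card[OF bij_betw_windows_through_column[OF layers \<open>0 < s\<close> \<open>s \<le> n\<close> that]]
    by simp
  show ?thesis
    unfolding exists_MRS_partial_def
    by (intro exI[of _ A] exI[of _ \<omega>] exI[of _ "\<Sum>l<d. \<delta>"] conjI allI impI)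
      (simp_all only: cells row_card column_card row_sum column_sum)
qed

lemma mult_eq_mult_div_gcd_factor:
  fixes m n s k :: nat
  assumes "0 < s" and "0 < k" and "m * s = n * k"
  obtains q where "m = k div gcd s k * q" and "q * s = n * gcd s k"
proof -
  define d where "d = gcd s k"
  define a where "a = k div d"
  have "0 < d" and "0 < a"
    using assms(1,2) by (simp_all add: d_def a_def div_greater_zero_iff)
  have k: "k = a * d" and s: "s = s div d * d"
    by (simp_all add: a_def d_def)
  have "coprime a (s div d)"
    using div_gcd_coprime[of s k] assms(1) by (simp add: a_def d_def coprime_commute)
  moreover have "m * (s div d) = n * a"
    using assms(3) \<open>0 < d\<close> by (subst (asm) k, subst (asm) s) (simp add: ac_simps)
  then have "a dvd m * (s div d)"
    by simp
  ultimately have "a dvd m"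
    by (simp add: coprime_dvd_mult_left_iff)
  then obtain q where m: "m = a * q" ..
  have "a * (q * s) = a * (n * d)"
    using assms(3) by (simp add: m k ac_simps)
  then have "q * s = n * d"
    using \<open>0 < a\<close> by simp
  with m show thesis
    by (intro that) (simp_all add: a_def d_def)
qed

theorem lemma5p11:
  fixes m n s k c :: nat
    and G :: "'a::{ab_group_add,finite} itself"
  assumes "2 \<le> s" and "s \<le> n" and "2 \<le> k" and "k \<le> m" and "m * s = n * k"
    and "1 \<le> c"
    and "card (UNIV :: 'a set) = n * k * c"
    and "exists_MRS_full G (k div gcd s k) s (m * gcd s k * c div k)"
  shows "exists_MRS_partial G m n s k c"
proof -
  define d where "d = gcd s k"
  define a where "a = k div d"
  obtain q where m: "m = a * q" and layers: "q * s = n * d"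
    using mult_eq_mult_div_gcd_factor[of s k m n] assms(1,3,5) unfolding a_def d_def by auto
  have k: "k = a * d"
    by (simp add: a_def d_def)
  have "m * d * c = q * c * k"
    by (simp add: m k ac_simps)
  then have "m * d * c div k = q * c"
    using assms(3) by (simp only:) simp
  then have "exists_MRS_full G a s (q * c)"
    using assms(8) by (simp add: a_def d_def)
  from exists_MRS_partial_cyclic_stack[OF this layers assms(2)] show ?thesis
    by (simp add: m k)
qed

end
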